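(* Let $A$ be a finite nonempty alphabet and $\zeta:A^\omega\to A^\omega$ a bijective $\omega$-sequential function. Then for every finite word $u\in A^*$ the remainder $\zeta_u$ is a bijection.
   Context: For an infinite word $z$, $z[0,n]$ is its prefix of length $n$. A map $\zeta:A^\omega\to A^\omega$ is $\omega$-sequential if whenever a finite word $u$ is a common prefix of $x$ and $y$, then $\zeta(x)[0,|u|]=\zeta(y)[0,|u|]$. For such $\zeta$ and $u\in A^*$, one has $\zeta(ux)=\epsilon(u)\zeta_u(x)$ for all $x\in A^\omega$, where $\epsilon(u)=\zeta(ux)[0,|u|]$ does not depend on $x$ and $\zeta_u:A^\omega\to A^\omega$; $\zeta_u$ is called the remainder of $\zeta$ for $u$. *)

theory Defs
  imports Main "HOL-Library.Omega_Words_Fun"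
begin

text \<open>Infinite words over alphabet 'a are 'a word = nat => 'a; finite words are lists.
  The alphabet A is the (finite, nonempty) type 'a.\<close>

definition omega_sequential :: "('a word \<Rightarrow> 'a word) \<Rightarrow> bool" where
  "omega_sequential \<zeta> \<longleftrightarrow>
     (\<forall>(u::'a list) x y. prefix (length u) x = u \<and> prefix (length u) y = u \<longrightarrow>
        prefix (length u) (\<zeta> x) = prefix (length u) (\<zeta> y))"

text \<open>The remainder zeta_u: zeta(u x) = eps(u) zeta_u(x), with eps(u) of length |u|.\<close>
definition remainder :: "('a word \<Rightarrow> 'a word) \<Rightarrow> 'a list \<Rightarrow> 'a word \<Rightarrow> 'a word" where
  "remainder \<zeta> u = (\<lambda>x. suffix (length u) (\<zeta> (u \<frown> x)))"

end

theory Submission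
  imports Defs
begin

text \<open>Let \<open>\<epsilon>(u)\<close> (\<open>output_prefix \<zeta> u\<close> below) be the common prefix of length \<open>|u|\<close>
  of all \<open>\<zeta>(u x)\<close>. Surjectivity of \<open>\<zeta>\<close> makes \<open>\<epsilon>\<close> map the words of length \<open>|u|\<close> onto
  themselves; as there are finitely many of them, \<open>\<epsilon>\<close> is injective on them too. Hence every
  preimage of a word \<open>\<epsilon>(u) y\<close> begins with \<open>u\<close>, which makes \<open>\<zeta>\<^sub>u\<close> surjective; injectivity
  of \<open>\<zeta>\<^sub>u\<close> is inherited directly from \<open>\<zeta>\<close>.\<close>

definition output_prefix :: "('a word \<Rightarrow> 'a word) \<Rightarrow> 'a list \<Rightarrow> 'a list" where
  "output_prefix \<zeta> u = prefix (length u) (\<zeta> (u \<frown> (\<lambda>_. undefined)))"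

lemma length_output_prefix [simp]: "length (output_prefix \<zeta> u) = length u"
  by (simp add: output_prefix_def)

lemma omega_sequential_prefix_eq:
  assumes "omega_sequential \<zeta>" and "prefix n x = prefix n y"
  shows "prefix n (\<zeta> x) = prefix n (\<zeta> y)"
proof -
  have "length (prefix n x) = n"
    by simp
  then show ?thesis
    using assms unfolding omega_sequential_def by metis
qed

lemma prefix_conc_image:
  assumes "omega_sequential \<zeta>"
  shows "prefix (length u) (\<zeta> (u \<frown> x)) = output_prefix \<zeta> u"
  unfolding output_prefix_def
  by (rule omega_sequential_prefix_eq[OF assms]) simp

lemma image_conc_eq_output_prefix_conc_remainder:
  assumes "omega_sequential \<zeta>"
  shows "\<zeta> (u \<frown> x) = output_prefix \<zeta> u \<frown> remainder \<zeta> u x"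
  by (metis prefix_suffix prefix_conc_image[OF assms] remainder_def)

lemma output_prefix_prefix:
  assumes "omega_sequential \<zeta>"
  shows "output_prefix \<zeta> (prefix n w) = prefix n (\<zeta> w)"
  using prefix_conc_image[OF assms, of "prefix n w" "suffix n w"]
  by (simp flip: prefix_suffix)

lemma output_prefix_surj_on_length:
  assumes "omega_sequential \<zeta>" and "surj \<zeta>"
  shows "{v. length v = n} \<subseteq> output_prefix \<zeta> ` {v. length v = n}"
proof
  fix v :: "'a list"
  assume "v \<in> {v. length v = n}"
  then have v: "length v = n" by simp
  obtain w where "\<zeta> w = v \<frown> (\<lambda>_. undefined)"
    using \<open>surj \<zeta>\<close> by (metis surjD)
  then have "output_prefix \<zeta> (prefix n w) = v"
    using v by (simp add: output_prefix_prefix[OF assms(1)])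
  then show "v \<in> output_prefix \<zeta> ` {v. length v = n}"
    by force
qed

lemma output_prefix_inj_on_length:
  fixes \<zeta> :: "('a::finite) word \<Rightarrow> 'a word"
  assumes "omega_sequential \<zeta>" and "surj \<zeta>"
  shows "inj_on (output_prefix \<zeta>) {v. length v = n}"
  using finite_lists_length_eq[OF finite_UNIV, of n]
  by (intro finite_surj_inj output_prefix_surj_on_length[OF assms]) simp

lemma inj_remainder:
  assumes "omega_sequential \<zeta>" and "inj \<zeta>"
  shows "inj (remainder \<zeta> u)"
proof
  fix x y
  assume "remainder \<zeta> u x = remainder \<zeta> u y"
  then have "\<zeta> (u \<frown> x) = \<zeta> (u \<frown> y)"
    by (simp add: image_conc_eq_output_prefix_conc_remainder[OF assms(1)])
  then have "u \<frown> x = u \<frown> y"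
    using \<open>inj \<zeta>\<close> by (simp add: inj_eq)
  then show "x = y"
    by (metis suffix_conc_length)
qed

lemma surj_remainder:
  fixes \<zeta> :: "('a::finite) word \<Rightarrow> 'a word"
  assumes "omega_sequential \<zeta>" and "surj \<zeta>"
  shows "surj (remainder \<zeta> u)"
  unfolding surj_def
proof
  fix y
  obtain w where w: "\<zeta> w = output_prefix \<zeta> u \<frown> y"
    using \<open>surj \<zeta>\<close> by (metis surjD)
  have "output_prefix \<zeta> (prefix (length u) w) = output_prefix \<zeta> u"
    using w by (simp add: output_prefix_prefix[OF assms(1)])
  then have "prefix (length u) w = u"
    using output_prefix_inj_on_length[OF assms, of "length u"] by (simp add: inj_on_def)
  then have "w = u \<frown> suffix (length u) w"
    by (metis prefix_suffix)
  then have "remainder \<zeta> u (suffix (length u) w) = suffix (length u) (\<zeta> w)"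
    by (metis remainder_def)
  also have "\<dots> = y"
    using w by (metis suffix_conc_length length_output_prefix)
  finally show "\<exists>x. y = remainder \<zeta> u x"
    by metis
qed

theorem lemma4p6:
  fixes \<zeta> :: "('a::finite) word \<Rightarrow> 'a word" and u :: "'a list"
  assumes "omega_sequential \<zeta>" and "bij \<zeta>"
  shows "bij (remainder \<zeta> u)"
proof (rule bijI)
  show "inj (remainder \<zeta> u)"
    using assms(1) bij_is_inj[OF assms(2)] by (rule inj_remainder)
  show "surj (remainder \<zeta> u)"
    using assms(1) bij_is_surj[OF assms(2)] by (rule surj_remainder)
qed

end
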